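(* For $k\geq1$ (resp. $k\geq2$), the $3$-valent $(2k,0)$-cluster $\triangle(2k)$ has eigenvalue $4$ (resp. $2$) as a $D_3$-invariant eigenvalue, with multiplicity (as $D_3$-invariant eigenvalue) at least $\lceil k/2\rceil$ (resp. $\lfloor k/2\rfloor$); that is, the space of $D_3$-invariant functions $u$ on $V(\triangle(2k))$ with $\Delta_{\triangle(2k)}u=4u$ (resp. $=2u$) has dimension at least $\lceil k/2\rceil$ (resp. $\lfloor k/2\rfloor$).
   Context: With $\omega=e^{\pi i/3}$, the $3$-valent $(m,0)$-cluster $\triangle(m)$ is the graph whose vertices are the barycenters of the $m^2$ unit triangles of the triangular lattice $\mathbb{Z}[\omega]$ contained in the triangle with vertices $0,m,m\omega$, two being adjacent when the triangles share an edge. Its Laplacian eigen-equation is considered with the Neumann-type convention $(\Delta_{\triangle(m)}u)(x)=3u(x)-\sum_{y\sim x}u(y)-(3-\deg(x))u(x)$, i.e. $(\Delta_{\triangle(m)}u)(x)=\deg_{\triangle(m)}(x)u(x)-\sum_{y\sim x}u(y)$. The dihedral group $D_3$ of symmetries of the triangle acts on $V(\triangle(m))$; a function $u$ is $D_3$-invariant if $u(\sigma x)=u(x)$ for all $\sigma\in D_3$ and all $x$. *)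

theory Defs
  imports Complex_Main "HOL-Library.Function_Algebras"
begin

text \<open>Lattice points of Z[omega] are encoded as pairs (x,y) of integers, standing for x + y*omega.
  The big triangle with vertices 0, m, m*omega is {(x,y). x >= 0, y >= 0, x + y <= m}.\<close>

definition up_tri :: "int \<Rightarrow> int \<Rightarrow> (int \<times> int) set" where
  "up_tri a b = {(a, b), (a + 1, b), (a, b + 1)}"

definition down_tri :: "int \<Rightarrow> int \<Rightarrow> (int \<times> int) set" where
  "down_tri a b = {(a + 1, b), (a, b + 1), (a + 1, b + 1)}"

text \<open>Vertices of the cluster: the unit triangles (as sets of their three corners)
  contained in the triangle with vertices 0, m, m*omega.\<close>

definition in_big_tri :: "nat \<Rightarrow> int \<times> int \<Rightarrow> bool" where
  "in_big_tri m p \<longleftrightarrow> fst p \<ge> 0 \<and> snd p \<ge> 0 \<and> fst p + snd p \<le> int m"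

definition cluster_V :: "nat \<Rightarrow> (int \<times> int) set set" where
  "cluster_V m = {T. (\<exists>a b. T = up_tri a b \<or> T = down_tri a b) \<and> (\<forall>p\<in>T. in_big_tri m p)}"

text \<open>Two unit triangles are adjacent iff they share an edge, i.e. exactly two corners.\<close>

definition cluster_adj :: "nat \<Rightarrow> (int \<times> int) set \<Rightarrow> (int \<times> int) set \<Rightarrow> bool" where
  "cluster_adj m S T \<longleftrightarrow> S \<in> cluster_V m \<and> T \<in> cluster_V m \<and> card (S \<inter> T) = 2"

definition cluster_deg :: "nat \<Rightarrow> (int \<times> int) set \<Rightarrow> nat" where
  "cluster_deg m S = card {T. cluster_adj m S T}"

text \<open>Laplacian with the Neumann-type convention: (Delta u)(x) = deg(x) u(x) - sum_{y~x} u(y).\<close>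

definition cluster_laplacian ::
  "nat \<Rightarrow> ((int \<times> int) set \<Rightarrow> real) \<Rightarrow> (int \<times> int) set \<Rightarrow> real" where
  "cluster_laplacian m u S = real (cluster_deg m S) * u S - (\<Sum>T\<in>{T. cluster_adj m S T}. u T)"

text \<open>The dihedral group D_3 of symmetries of the triangle 0, m, m*omega acts on lattice
  points by permuting the barycentric coordinates (x, y, m - x - y).\<close>

definition d3_maps :: "nat \<Rightarrow> (int \<times> int \<Rightarrow> int \<times> int) set" where
  "d3_maps m = {\<lambda>(x, y). (x, y),
                \<lambda>(x, y). (y, x),
                \<lambda>(x, y). (y, int m - x - y),
                \<lambda>(x, y). (int m - x - y, x),
                \<lambda>(x, y). (x, int m - x - y),
                \<lambda>(x, y). (int m - x - y, y)}"

definition D3_invariant :: "nat \<Rightarrow> ((int \<times> int) set \<Rightarrow> real) \<Rightarrow> bool" where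
  "D3_invariant m u \<longleftrightarrow> (\<forall>\<sigma>\<in>d3_maps m. \<forall>S\<in>cluster_V m. u (\<sigma> ` S) = u S)"

text \<open>The space of D_3-invariant eigenfunctions for eigenvalue lam, as real-valued functions
  on V(triangle(m)) (extended by 0 outside the vertex set).\<close>

definition D3_eigenspace :: "nat \<Rightarrow> real \<Rightarrow> ((int \<times> int) set \<Rightarrow> real) set" where
  "D3_eigenspace m lam = {u. (\<forall>S. S \<notin> cluster_V m \<longrightarrow> u S = 0) \<and> D3_invariant m u \<and>
      (\<forall>S\<in>cluster_V m. cluster_laplacian m u S = lam * u S)}"

definition fun_dim :: "('a \<Rightarrow> real) set \<Rightarrow> nat" where
  "fun_dim E = vector_space.dim (\<lambda>c f x. c * f x) E"

end

theory Submission
  imports Defs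
begin

(* A unit triangle of the cluster is described by barycentric coordinates: the up triangle with
   lower corner (a, b) by (a, b, c) and the down triangle with lower corner (a, b) by
   (a + 1, b + 1, c), where c = m - 1 - a - b.  For a function g on the integers vanishing at
   even numbers let T = tri_value g, i.e. T(x, y, z) = +/-(g x + g y + g z) with the minus sign
   exactly when x, y, z are all odd.  T is symmetric, so the function equal to T on up triangles and to -s T on down
   triangles is D3-invariant.  Because g vanishes at even numbers, T sums to zero over every
   triangle together with its three lattice neighbours, so this function satisfies the
   eigen-equation for 3 - s away from the boundary.  If moreover g (m - x) = -s g x, a neighbour
   missing at the boundary would carry the value of the triangle itself, which is exactly the
   Neumann convention.  Taking g = delta_j - s delta_(m - j) for odd j <= m/2 yields functions
   whose values at the up triangles with corner (0, j) form a diagonal matrix.  For m = 2k,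
   s = -1 (eigenvalue 4) admits the ceil(k/2) odd j <= k and s = 1 (eigenvalue 2) the
   floor(k/2) odd j < k. *)

definition corner :: "(int \<times> int) set \<Rightarrow> int \<times> int" where
  "corner S = (Min (fst ` S), Min (snd ` S))"

lemma corner_up_tri [simp]: "corner (up_tri a b) = (a, b)"
  by (simp add: corner_def up_tri_def)

lemma corner_down_tri [simp]: "corner (down_tri a b) = (a, b)"
  by (simp add: corner_def down_tri_def)

lemma corner_in_up_tri [simp]: "(a, b) \<in> up_tri a b"
  by (simp add: up_tri_def)

lemma corner_notin_down_tri [simp]: "(a, b) \<notin> down_tri a b"
  by (simp add: down_tri_def)

lemma up_tri_eq_iff [simp]: "up_tri a b = up_tri c d \<longleftrightarrow> a = c \<and> b = d"
  by (metis corner_up_tri prod.inject)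

lemma down_tri_eq_iff [simp]: "down_tri a b = down_tri c d \<longleftrightarrow> a = c \<and> b = d"
  by (metis corner_down_tri prod.inject)

lemma up_tri_neq_down_tri [simp]: "up_tri a b \<noteq> down_tri c d" "down_tri c d \<noteq> up_tri a b"
  by (metis corner_down_tri corner_in_up_tri corner_notin_down_tri corner_up_tri)+

lemma up_tri_in_cluster_V: "up_tri a b \<in> cluster_V m \<longleftrightarrow> 0 \<le> a \<and> 0 \<le> b \<and> a + b + 1 \<le> int m"
  by (auto simp: cluster_V_def up_tri_def in_big_tri_def)

lemma down_tri_in_cluster_V: "down_tri a b \<in> cluster_V m \<longleftrightarrow> 0 \<le> a \<and> 0 \<le> b \<and> a + b + 2 \<le> int m"
  by (auto simp: cluster_V_def down_tri_def in_big_tri_def)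

lemma cluster_V_cases:
  assumes "S \<in> cluster_V m"
  obtains (up) a b where "S = up_tri a b" "0 \<le> a" "0 \<le> b" "a + b + 1 \<le> int m"
    | (down) a b where "S = down_tri a b" "0 \<le> a" "0 \<le> b" "a + b + 2 \<le> int m"
  using assms up_tri_in_cluster_V down_tri_in_cluster_V unfolding cluster_V_def by blast

lemma finite_cluster_V: "finite (cluster_V m)"
proof (rule finite_subset)
  let ?R = "{0..int m} \<times> {0..int m}"
  show "cluster_V m \<subseteq> case_prod up_tri ` ?R \<union> case_prod down_tri ` ?R"
  proof
    fix S assume "S \<in> cluster_V m"
    then show "S \<in> case_prod up_tri ` ?R \<union> case_prod down_tri ` ?R"
      by (cases rule: cluster_V_cases) (auto intro!: image_eqI[of _ _ "(a, b)" for a b])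
  qed
qed simp

lemma card_Int_up_tri_up_tri: "card (up_tri a b \<inter> up_tri c d) \<noteq> 2"
  by (simp add: up_tri_def Int_insert_left card_insert_if)

lemma card_Int_down_tri_down_tri: "card (down_tri a b \<inter> down_tri c d) \<noteq> 2"
  by (simp add: down_tri_def Int_insert_left card_insert_if)

lemma card_Int_up_tri_down_tri:
  "card (up_tri a b \<inter> down_tri c d) = 2 \<longleftrightarrow>
     (c, d) \<in> {(a, b), (a - 1, b), (a, b - 1)}"
  by (auto simp: up_tri_def down_tri_def Int_insert_left card_insert_if)

lemma card_Int_down_tri_up_tri:
  "card (down_tri a b \<inter> up_tri c d) = 2 \<longleftrightarrow>
     (c, d) \<in> {(a, b), (a + 1, b), (a, b + 1)}"
  by (subst Int_commute) (auto simp: card_Int_up_tri_down_tri)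

lemma cluster_neighbours_up_tri:
  assumes "up_tri a b \<in> cluster_V m"
  shows "{T. cluster_adj m (up_tri a b) T} =
    {down_tri a b, down_tri (a - 1) b, down_tri a (b - 1)} \<inter> cluster_V m"
proof (intro set_eqI iffI)
  fix T assume "T \<in> {T. cluster_adj m (up_tri a b) T}"
  then have T: "T \<in> cluster_V m" "card (up_tri a b \<inter> T) = 2" by (auto simp: cluster_adj_def)
  from T(1) show "T \<in> {down_tri a b, down_tri (a - 1) b, down_tri a (b - 1)} \<inter> cluster_V m"
    by (cases rule: cluster_V_cases) (use T card_Int_up_tri_up_tri card_Int_up_tri_down_tri in auto)
qed (use assms in \<open>auto simp: cluster_adj_def card_Int_up_tri_down_tri\<close>)

lemma cluster_neighbours_down_tri:
  assumes "down_tri a b \<in> cluster_V m"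
  shows "{T. cluster_adj m (down_tri a b) T} = {up_tri a b, up_tri (a + 1) b, up_tri a (b + 1)}"
proof (intro set_eqI iffI)
  fix T assume "T \<in> {T. cluster_adj m (down_tri a b) T}"
  then have T: "T \<in> cluster_V m" "card (down_tri a b \<inter> T) = 2" by (auto simp: cluster_adj_def)
  from T(1) show "T \<in> {up_tri a b, up_tri (a + 1) b, up_tri a (b + 1)}"
    by (cases rule: cluster_V_cases) (use T card_Int_down_tri_down_tri card_Int_down_tri_up_tri in auto)
qed (use assms in \<open>auto simp: cluster_adj_def card_Int_down_tri_up_tri
                               up_tri_in_cluster_V down_tri_in_cluster_V\<close>)

lemma cluster_laplacian_eq_sum_diff:
  assumes "finite {T. cluster_adj m S T}"
  shows "cluster_laplacian m u S = (\<Sum>T\<in>{T. cluster_adj m S T}. u S - u T)"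
  using assms by (simp add: cluster_laplacian_def cluster_deg_def sum_subtractf)

definition triple_perms :: "'a \<Rightarrow> 'a \<Rightarrow> 'a \<Rightarrow> ('a \<times> 'a \<times> 'a) set" where
  "triple_perms a b c = {(a, b, c), (b, a, c), (b, c, a), (c, a, b), (a, c, b), (c, b, a)}"

lemma d3_image_up_tri:
  assumes "\<sigma> \<in> d3_maps m" "a + b + c = int m - 1"
  obtains x y z where "\<sigma> ` up_tri a b = up_tri x y" "(x, y, z) \<in> triple_perms a b c"
proof -
  have c: "int m - a - b = c + 1" "int m - (a + 1) - b = c" "int m - a - (b + 1) = c"
    using assms(2) by simp_all
  from assms(1) have "\<exists>x y z. \<sigma> ` up_tri a b = up_tri x y \<and> (x, y, z) \<in> triple_perms a b c"
    unfolding d3_maps_def triple_perms_def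
    by (elim insertE emptyE) (auto simp: up_tri_def c insert_commute)
  then show thesis using that by blast
qed

lemma d3_image_down_tri:
  assumes "\<sigma> \<in> d3_maps m" "a + b + c = int m - 2"
  obtains x y z where "\<sigma> ` down_tri a b = down_tri x y" "(x, y, z) \<in> triple_perms a b c"
proof -
  have c: "int m - (a + 1) - b = c + 1" "int m - a - (b + 1) = c + 1" "int m - (a + 1) - (b + 1) = c"
    using assms(2) by simp_all
  from assms(1) have "\<exists>x y z. \<sigma> ` down_tri a b = down_tri x y \<and> (x, y, z) \<in> triple_perms a b c"
    unfolding d3_maps_def triple_perms_def
    by (elim insertE emptyE) (auto simp: down_tri_def c insert_commute)
  then show thesis using that by blast
qed

definition tri_value :: "(int \<Rightarrow> real) \<Rightarrow> int \<Rightarrow> int \<Rightarrow> int \<Rightarrow> real" where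
  "tri_value g x y z = (if odd x \<and> odd y \<and> odd z then -1 else 1) * (g x + g y + g z)"

lemma tri_value_triple_perms:
  "(x, y, z) \<in> triple_perms a b c \<Longrightarrow> tri_value g x y z = tri_value g a b c"
  unfolding triple_perms_def tri_value_def by (auto simp: ac_simps)

(* In barycentric coordinates: an up triangle (x, y, z) with its three down neighbours, and a
   down triangle (x + 1, y + 1, z + 1) with its three up neighbours. *)
lemma tri_value_up_neighbourhood:
  assumes g: "\<And>x. even x \<Longrightarrow> g x = 0" and "odd (x + y + z)"
  shows "tri_value g x y z + tri_value g (x + 1) (y + 1) z + tri_value g (x + 1) y (z + 1)
           + tri_value g x (y + 1) (z + 1) = 0"
  using assms(2) by (cases "even x"; cases "even y"; cases "even z") (auto simp: tri_value_def g)

lemma tri_value_down_neighbourhood: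
  assumes g: "\<And>x. even x \<Longrightarrow> g x = 0" and "even (x + y + z)"
  shows "tri_value g (x + 1) (y + 1) (z + 1) + tri_value g x y (z + 1) + tri_value g (x + 1) y z
           + tri_value g x (y + 1) z = 0"
  using assms(2) by (cases "even x"; cases "even y"; cases "even z") (auto simp: tri_value_def g)

definition profile_fun :: "nat \<Rightarrow> real \<Rightarrow> (int \<Rightarrow> real) \<Rightarrow> (int \<times> int) set \<Rightarrow> real" where
  "profile_fun m s g S =
     (if S \<notin> cluster_V m then 0
      else let (a, b) = corner S; c = int m - 1 - a - b
           in if (a, b) \<in> S then tri_value g a b c else - s * tri_value g (a + 1) (b + 1) c)"

lemma profile_fun_up_tri:
  assumes "up_tri a b \<in> cluster_V m" "a + b + c = int m - 1"
  shows "profile_fun m s g (up_tri a b) = tri_value g a b c"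
proof -
  have "profile_fun m s g (up_tri a b) = tri_value g a b (int m - 1 - a - b)"
    using assms(1) by (simp add: profile_fun_def)
  also have "int m - 1 - a - b = c" using assms(2) by simp
  finally show ?thesis .
qed

lemma profile_fun_down_tri:
  assumes "down_tri a b \<in> cluster_V m" "a + b + c = int m - 2"
  shows "profile_fun m s g (down_tri a b) = - s * tri_value g (a + 1) (b + 1) (c + 1)"
proof -
  have "profile_fun m s g (down_tri a b) = - s * tri_value g (a + 1) (b + 1) (int m - 1 - a - b)"
    using assms(1) by (simp add: profile_fun_def)
  also have "int m - 1 - a - b = c + 1" using assms(2) by simp
  finally show ?thesis .
qed

locale reflected_profile =
  fixes m :: nat and s :: real and g :: "int \<Rightarrow> real"
  assumes s_square: "s * s = 1" and even_m: "even m"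
    and g_even: "\<And>x. even x \<Longrightarrow> g x = 0"
    and g_reflect: "\<And>x. g (int m - x) = - s * g x"
begin

lemma tri_value_reflect_side:
  assumes "y + z = int m - 1"
  shows "tri_value g 0 y z + s * tri_value g 0 (y + 1) (z + 1) = 0"
proof -
  have "z = int m - (y + 1)" "y = int m - (z + 1)" using assms by simp_all
  then have "g z = - s * g (y + 1)" "g y = - s * g (z + 1)" using g_reflect by metis+
  moreover have "odd (y + z)" using assms even_m by simp
  ultimately show ?thesis
    using s_square by (cases "even y") (auto simp: tri_value_def g_even algebra_simps)
qed

(* (a', b') runs over the three down neighbours of up_tri a b.  Outside the cluster the left-hand
   side is 0 by the Neumann convention, and the reflection g (m - x) = -s g x makes the right-hand
   side 0 as well. *)
lemma up_tri_neighbour_term: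
  assumes V: "up_tri a b \<in> cluster_V m" and c: "a + b + c = int m - 1"
    and nb: "(a', b', c') \<in> {(a, b, c - 1), (a - 1, b, c), (a, b - 1, c)}"
  shows "(if down_tri a' b' \<in> cluster_V m
          then profile_fun m s g (up_tri a b) - profile_fun m s g (down_tri a' b') else 0)
         = tri_value g a b c + s * tri_value g (a' + 1) (b' + 1) (c' + 1)"
proof (cases "down_tri a' b' \<in> cluster_V m")
  case True
  moreover have "a' + b' + c' = int m - 2" using c nb by auto
  ultimately show ?thesis
    using V c nb by (auto simp: profile_fun_up_tri profile_fun_down_tri)
next
  case False
  then consider (a_side) "a = 0" "a' = -1" | (b_side) "b = 0" "b' = -1" | (c_side) "c = 0" "c' = -1"
    using V c nb by (auto simp: up_tri_in_cluster_V down_tri_in_cluster_V)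
  then show ?thesis
  proof cases
    case a_side
    then show ?thesis using False nb c tri_value_reflect_side[of b c] by auto
  next
    case b_side
    then show ?thesis using False nb c tri_value_reflect_side[of a c]
      tri_value_triple_perms[of 0 a c a 0 c g] tri_value_triple_perms[of 0 "a + 1" "c + 1" "a + 1" 0 "c + 1" g]
      by (auto simp: triple_perms_def)
  next
    case c_side
    then show ?thesis using False nb c tri_value_reflect_side[of a b]
      tri_value_triple_perms[of 0 a b a b 0 g] tri_value_triple_perms[of 0 "a + 1" "b + 1" "a + 1" "b + 1" 0 g]
      by (auto simp: triple_perms_def)
  qed
qed

lemma laplacian_profile_fun_up_tri:
  assumes V: "up_tri a b \<in> cluster_V m"
  shows "cluster_laplacian m (profile_fun m s g) (up_tri a b) = (3 - s) * profile_fun m s g (up_tri a b)"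
proof -
  define c where "c = int m - 1 - a - b"
  have c: "a + b + c = int m - 1" by (simp add: c_def)
  let ?u = "profile_fun m s g"
  let ?term = "\<lambda>T. if T \<in> cluster_V m then ?u (up_tri a b) - ?u T else 0"
  have "cluster_laplacian m ?u (up_tri a b) =
      (\<Sum>T\<in>{down_tri a b, down_tri (a - 1) b, down_tri a (b - 1)} \<inter> cluster_V m. ?u (up_tri a b) - ?u T)"
    using V by (simp add: cluster_laplacian_eq_sum_diff cluster_neighbours_up_tri)
  also have "\<dots> = ?term (down_tri a b) + ?term (down_tri (a - 1) b) + ?term (down_tri a (b - 1))"
    by (simp add: sum.inter_restrict)
  also have "\<dots> = 3 * tri_value g a b c + s * (tri_value g (a + 1) (b + 1) c
      + tri_value g a (b + 1) (c + 1) + tri_value g (a + 1) b (c + 1))"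
    using up_tri_neighbour_term[OF V c, where a' = a and b' = b and c' = "c - 1"]
      up_tri_neighbour_term[OF V c, where a' = "a - 1" and b' = b and c' = c]
      up_tri_neighbour_term[OF V c, where a' = a and b' = "b - 1" and c' = c]
    by (simp add: algebra_simps)
  also have "\<dots> = (3 - s) * tri_value g a b c"
  proof -
    have "odd (a + b + c)" using c even_m by simp
    from tri_value_up_neighbourhood[where g = g, OF g_even this]
    have "tri_value g (a + 1) (b + 1) c + tri_value g a (b + 1) (c + 1) + tri_value g (a + 1) b (c + 1)
        = - tri_value g a b c" by linarith
    then show ?thesis by (simp add: algebra_simps)
  qed
  finally show ?thesis using V c by (simp add: profile_fun_up_tri)
qed

lemma laplacian_profile_fun_down_tri:
  assumes V: "down_tri a b \<in> cluster_V m"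
  shows "cluster_laplacian m (profile_fun m s g) (down_tri a b) = (3 - s) * profile_fun m s g (down_tri a b)"
proof -
  define c where "c = int m - 2 - a - b"
  have c: "a + b + c = int m - 2" by (simp add: c_def)
  let ?u = "profile_fun m s g"
  have nb_V: "up_tri a b \<in> cluster_V m" "up_tri (a + 1) b \<in> cluster_V m" "up_tri a (b + 1) \<in> cluster_V m"
    using V by (auto simp: up_tri_in_cluster_V down_tri_in_cluster_V)
  have "cluster_laplacian m ?u (down_tri a b) =
      (\<Sum>T\<in>{up_tri a b, up_tri (a + 1) b, up_tri a (b + 1)}. ?u (down_tri a b) - ?u T)"
    using V by (simp add: cluster_laplacian_eq_sum_diff cluster_neighbours_down_tri)
  also have "\<dots> = - 3 * s * tri_value g (a + 1) (b + 1) (c + 1) - (tri_value g a b (c + 1)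
      + tri_value g (a + 1) b c + tri_value g a (b + 1) c)"
    using profile_fun_down_tri[OF V c] profile_fun_up_tri[OF nb_V(1), where c = "c + 1"]
      profile_fun_up_tri[OF nb_V(2), where c = c] profile_fun_up_tri[OF nb_V(3), where c = c] c
    by (simp add: algebra_simps)
  also have "\<dots> = (3 - s) * (- s * tri_value g (a + 1) (b + 1) (c + 1))"
  proof -
    have "even (a + b + c)" using c even_m by simp
    from tri_value_down_neighbourhood[where g = g, OF g_even this]
    have "tri_value g a b (c + 1) + tri_value g (a + 1) b c + tri_value g a (b + 1) c
        = - tri_value g (a + 1) (b + 1) (c + 1)" by linarith
    then show ?thesis using s_square by (simp add: algebra_simps)
  qed
  finally show ?thesis using V c by (simp add: profile_fun_down_tri)
qed

lemma profile_fun_D3_invariant: "D3_invariant m (profile_fun m s g)"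
  unfolding D3_invariant_def
proof (intro ballI)
  fix \<sigma> S assume \<sigma>: "\<sigma> \<in> d3_maps m" and S: "S \<in> cluster_V m"
  from S show "profile_fun m s g (\<sigma> ` S) = profile_fun m s g S"
  proof (cases rule: cluster_V_cases)
    case (up a b)
    define c where "c = int m - 1 - a - b"
    have c: "a + b + c = int m - 1" by (simp add: c_def)
    obtain x y z where xy: "\<sigma> ` up_tri a b = up_tri x y" and xyz: "(x, y, z) \<in> triple_perms a b c"
      by (rule d3_image_up_tri[OF \<sigma> c])
    have "x + y + z = int m - 1" "up_tri x y \<in> cluster_V m"
      using xyz up c by (auto simp: triple_perms_def up_tri_in_cluster_V)
    then show ?thesis
      using S up xy c tri_value_triple_perms[OF xyz] profile_fun_up_tri by metis
  next
    case (down a b)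
    define c where "c = int m - 2 - a - b"
    have c: "a + b + c = int m - 2" by (simp add: c_def)
    obtain x y z where xy: "\<sigma> ` down_tri a b = down_tri x y" and xyz: "(x, y, z) \<in> triple_perms a b c"
      by (rule d3_image_down_tri[OF \<sigma> c])
    have "(x + 1, y + 1, z + 1) \<in> triple_perms (a + 1) (b + 1) (c + 1)"
      using xyz by (auto simp: triple_perms_def)
    then have "tri_value g (x + 1) (y + 1) (z + 1) = tri_value g (a + 1) (b + 1) (c + 1)"
      by (rule tri_value_triple_perms)
    moreover have "x + y + z = int m - 2" "down_tri x y \<in> cluster_V m"
      using xyz down c by (auto simp: triple_perms_def down_tri_in_cluster_V)
    ultimately show ?thesis
      using S down xy c profile_fun_down_tri by metis
  qed
qed

lemma profile_fun_in_D3_eigenspace: "profile_fun m s g \<in> D3_eigenspace m (3 - s)"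
proof -
  have "cluster_laplacian m (profile_fun m s g) S = (3 - s) * profile_fun m s g S"
    if "S \<in> cluster_V m" for S
    using that
    by (cases rule: cluster_V_cases) (use that laplacian_profile_fun_up_tri laplacian_profile_fun_down_tri in auto)
  then show ?thesis
    using profile_fun_D3_invariant by (auto simp: D3_eigenspace_def profile_fun_def)
qed

lemma profile_fun_up_tri_side:
  assumes "odd j" "0 \<le> j" "j + 1 \<le> int m"
  shows "profile_fun m s g (up_tri 0 j) = g j"
proof -
  have "even (int m - 1 - j)" using assms(1) even_m by simp
  then show ?thesis
    using assms profile_fun_up_tri[where a = 0 and b = j and c = "int m - 1 - j"]
    by (simp add: up_tri_in_cluster_V tri_value_def g_even)
qed

end

lemma sum_fun_apply: "(\<Sum>a\<in>A. F a) x = (\<Sum>a\<in>A. F a x)"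
  by (induction A rule: infinite_finite_induct) auto

interpretation fun_space: vector_space "\<lambda>(c :: real) (f :: 'a \<Rightarrow> real) x. c * f x"
  by unfold_locales (auto simp: algebra_simps fun_eq_iff)

lemma card_le_fun_dim:
  fixes W E B :: "('a \<Rightarrow> real) set"
  assumes "finite W" "E \<subseteq> fun_space.span W" "B \<subseteq> E" "fun_space.independent B"
  shows "card B \<le> fun_dim E"
proof -
  obtain A where A: "A \<subseteq> E" "fun_space.independent A" "E \<subseteq> fun_space.span A" "card A = fun_space.dim E"
    by (rule fun_space.basis_exists)
  have "finite A"
    using fun_space.independent_span_bound[OF assms(1) A(2)] A(1) assms(2) by blast
  then have "card B \<le> card A"
    using fun_space.independent_span_bound[OF _ assms(4)] A(3) assms(3) by blast
  then show ?thesis using A(4) by (simp add: fun_dim_def)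
qed

lemma independent_if_diagonal:
  fixes f :: "'i \<Rightarrow> 'a \<Rightarrow> real" and p :: "'i \<Rightarrow> 'a"
  assumes diag: "\<And>i. i \<in> I \<Longrightarrow> f i (p i) \<noteq> 0"
    and off_diag: "\<And>i j. i \<in> I \<Longrightarrow> j \<in> I \<Longrightarrow> i \<noteq> j \<Longrightarrow> f j (p i) = 0"
  shows "fun_space.independent (f ` I)" "inj_on f I"
proof -
  show "inj_on f I"
    using diag off_diag by (metis inj_onI)
  show "fun_space.independent (f ` I)"
    unfolding fun_space.independent_explicit_finite_subsets
  proof (intro allI impI ballI)
    fix t u v
    assume t: "t \<subseteq> f ` I" "finite t" and sum0: "(\<Sum>w\<in>t. (\<lambda>x. u w * w x)) = 0" and v: "v \<in> t"
    obtain i where i: "i \<in> I" "v = f i" using v t by blast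
    have "(\<Sum>w\<in>t. u w * w (p i)) = 0"
      using fun_cong[OF sum0, of "p i"] by (simp add: sum_fun_apply)
    moreover have "(\<Sum>w\<in>t - {v}. u w * w (p i)) = 0"
    proof (rule sum.neutral, rule ballI)
      fix w assume "w \<in> t - {v}"
      then obtain j where "j \<in> I" "w = f j" "j \<noteq> i" using t i by blast
      then show "u w * w (p i) = 0" using off_diag i by simp
    qed
    ultimately have "u v * v (p i) = 0" using sum.remove[OF t(2) v, of "\<lambda>w. u w * w (p i)"] by simp
    then show "u v = 0" using diag i by simp
  qed
qed

lemma D3_eigenspace_subset_span:
  "D3_eigenspace m lam \<subseteq> fun_space.span ((\<lambda>T S. if S = T then 1 else 0) ` cluster_V m)"
proof
  fix u assume u: "u \<in> D3_eigenspace m lam"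
  let ?\<delta> = "\<lambda>T S. if S = T then 1 else (0 :: real)"
  have "u = (\<Sum>T\<in>cluster_V m. (\<lambda>S. u T * ?\<delta> T S))"
    using u finite_cluster_V[of m]
    by (auto simp: fun_eq_iff sum_fun_apply D3_eigenspace_def if_distrib cong: if_cong)
  also have "\<dots> \<in> fun_space.span (?\<delta> ` cluster_V m)"
    by (intro fun_space.span_sum fun_space.span_scale fun_space.span_base) auto
  finally show "u \<in> fun_space.span (?\<delta> ` cluster_V m)" .
qed

definition reflected_delta :: "nat \<Rightarrow> real \<Rightarrow> int \<Rightarrow> int \<Rightarrow> real" where
  "reflected_delta m s j x = (if x = j then 1 else 0) - s * (if x = int m - j then 1 else 0)"

lemma reflected_profile_reflected_delta:
  assumes "s * s = 1" "even m" "odd j"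
  shows "reflected_profile m s (reflected_delta m s j)"
proof
  fix x :: int
  show "even x \<Longrightarrow> reflected_delta m s j x = 0"
    using assms(2,3) by (auto simp: reflected_delta_def)
  show "reflected_delta m s j (int m - x) = - s * reflected_delta m s j x"
    using assms(1) by (auto simp: reflected_delta_def algebra_simps)
qed (use assms in auto)

lemma card_le_fun_dim_D3_eigenspace:
  assumes s: "s * s = 1" and m: "even m"
    and J: "\<And>j. j \<in> J \<Longrightarrow> odd j \<and> 0 < j \<and> 2 * j \<le> int m"
    and J_middle: "\<And>j. j \<in> J \<Longrightarrow> 2 * j = int m \<Longrightarrow> s \<noteq> 1"
  shows "card J \<le> fun_dim (D3_eigenspace m (3 - s))"
proof -
  let ?f = "\<lambda>j. profile_fun m s (reflected_delta m s j)"
  have profile: "reflected_profile m s (reflected_delta m s j)" if "j \<in> J" for j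
    using reflected_profile_reflected_delta s m J that by blast
  have eval: "?f j (up_tri 0 i) = reflected_delta m s j i" if "i \<in> J" "j \<in> J" for i j
    using reflected_profile.profile_fun_up_tri_side[OF profile[OF that(2)]] J[OF that(1)] by simp
  have off_diag: "?f j (up_tri 0 i) = 0" if ij: "i \<in> J" "j \<in> J" "i \<noteq> j" for i j
  proof -
    have "i \<noteq> int m - j" using J[of i] J[of j] ij by linarith
    then show ?thesis using ij eval by (simp add: reflected_delta_def)
  qed
  have diag: "?f i (up_tri 0 i) \<noteq> 0" if "i \<in> J" for i
    using that J_middle eval by (auto simp: reflected_delta_def)
  note independent = independent_if_diagonal[where f = ?f and p = "up_tri 0", OF diag off_diag]
  have "?f ` J \<subseteq> D3_eigenspace m (3 - s)"
    using reflected_profile.profile_fun_in_D3_eigenspace[OF profile] by blast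
  from card_le_fun_dim[OF finite_imageI[OF finite_cluster_V] D3_eigenspace_subset_span this independent(1)]
  show ?thesis using card_image[OF independent(2)] by simp
qed

lemma nat_ceiling_half: "nat \<lceil>real k / 2\<rceil> = (k + 1) div 2"
  by linarith

lemma nat_floor_half: "nat \<lfloor>real k / 2\<rfloor> = k div 2"
  by linarith

theorem lemma5p1:
  fixes k :: nat
  shows "(k \<ge> 1 \<longrightarrow> fun_dim (D3_eigenspace (2 * k) 4) \<ge> nat \<lceil>real k / 2\<rceil>) \<and>
         (k \<ge> 2 \<longrightarrow> fun_dim (D3_eigenspace (2 * k) 2) \<ge> nat \<lfloor>real k / 2\<rfloor>)"
proof -
  let ?odds = "\<lambda>n. (\<lambda>i. 2 * int i + 1) ` {..<n}"
  have card_odds: "card (?odds n) = n" for n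
    by (simp add: card_image inj_on_def)
  have "card (?odds ((k + 1) div 2)) \<le> fun_dim (D3_eigenspace (2 * k) (3 - (-1)))"
    by (rule card_le_fun_dim_D3_eigenspace) auto
  moreover have "card (?odds (k div 2)) \<le> fun_dim (D3_eigenspace (2 * k) (3 - 1))"
    by (rule card_le_fun_dim_D3_eigenspace) auto
  ultimately show ?thesis
    unfolding card_odds nat_ceiling_half nat_floor_half by simp
qed

end
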